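(* Let $G\subset\mathrm{Homeo}_+([0,1])$ be a group without linked fixed points, and let $I^\infty(G)=\bigcup_{n\ge0}I^n(G)$ where $I^0(G)=G$ and $I^{n+1}(G)=I(I^n(G))$. Then $I^\infty(G)$ is a complete group without linked fixed points, and moreover: (1) the orbits of $I^\infty(G)$ and of $G$ on $[0,1]$ coincide; (2) every pair of successive fixed points of $I^\infty(G)$ is a pair of successive fixed points of $G$; (3) for every pair $\{a,b\}$ of successive fixed points of some $f\in G$ and every relative translation number $\tau$ of $I^\infty(G)$ at $\{a,b\}$, one has $\tau(G_{[a,b]})=\tau(I^\infty(G)_{[a,b]})$; (4) every complete group without linked fixed points containing $G$ contains $I^\infty(G)$.
   Context: For a group $G$ of homeomorphisms of $[0,1]$, a pair of successive fixed points of $G$ is a pair $\{a,b\}$, $a<b$, such that $(a,b)$ is a connected component of $[0,1]\setminus \mathrm{Fix}(g)$ for some $g\in G$; two pairs $\{a,b\},\{c,d\}$ are linked if $(a,b)\cap\{c,d\}$ or $(c,d)\cap\{a,b\}$ consists of exactly one point; $G$ is without linked fixed points if no two such pairs are linked. A homeomorphism $h\in\mathrm{Homeo}_+([0,1])$ is induced by $g\in\mathrm{Homeo}_+([0,1])$ if $h(x)\in\{x,g(x)\}$ for every $x\in[0,1]$ (equivalently $h$ equals $g$ on a union of connected components of $[0,1]\setminus\mathrm{Fix}(g)$ and the identity elsewhere). For a group $G$, $I(G)$ denotes the group generated by all homeomorphisms induced by elements of $G$. A group without linked fixed points is complete if it contains every homeomorphism induced by any of its elements. For a group $H$ without linked fixed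 points and a pair $\{a,b\}$ of successive fixed points, $H_{[a,b]}$ is the stabilizer of $[a,b]$ in $H$, and a relative translation number at $\{a,b\}$ is a group morphism $\tau:H_{[a,b]}\to\mathbb R$ whose kernel is the set of elements having a fixed point in $(a,b)$ and with $\tau(g)>0$ iff $g(x)>x$ on $(a,b)$ (such a morphism exists and is unique up to a positive factor). *)

theory Defs
  imports "HOL-Analysis.Analysis"
begin

text \<open>Elements of Homeo_+([0,1]) are represented as functions real => real that
are increasing homeomorphisms of [0,1] and the identity outside [0,1]
(so that composition and inv are the group operations).\<close>

definition homeo_plus :: "(real \<Rightarrow> real) \<Rightarrow> bool" where
  "homeo_plus f \<longleftrightarrow> continuous_on {0..1} f \<and> strict_mono_on {0..1} f
     \<and> f ` {0..1} = {0..1} \<and> (\<forall>x. x \<notin> {0..1} \<longrightarrow> f x = x)"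

definition homeo_group :: "(real \<Rightarrow> real) set \<Rightarrow> bool" where
  "homeo_group G \<longleftrightarrow> (\<forall>g\<in>G. homeo_plus g) \<and> id \<in> G
     \<and> (\<forall>f\<in>G. \<forall>g\<in>G. f \<circ> g \<in> G) \<and> (\<forall>g\<in>G. inv g \<in> G)"

definition fixset :: "(real \<Rightarrow> real) \<Rightarrow> real set" where
  "fixset g = {x \<in> {0..1}. g x = x}"

definition succ_pair :: "(real \<Rightarrow> real) set \<Rightarrow> real \<Rightarrow> real \<Rightarrow> bool" where
  "succ_pair G a b \<longleftrightarrow> a < b \<and>
     (\<exists>g\<in>G. {a<..<b} \<in> components ({0..1} - fixset g))"

definition linked :: "real \<Rightarrow> real \<Rightarrow> real \<Rightarrow> real \<Rightarrow> bool" where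
  "linked a b c d \<longleftrightarrow> card ({a<..<b} \<inter> {c, d}) = 1 \<or> card ({c<..<d} \<inter> {a, b}) = 1"

definition no_linked_fixed_points :: "(real \<Rightarrow> real) set \<Rightarrow> bool" where
  "no_linked_fixed_points G \<longleftrightarrow>
     (\<forall>a b c d. succ_pair G a b \<longrightarrow> succ_pair G c d \<longrightarrow> \<not> linked a b c d)"

definition induced_by :: "(real \<Rightarrow> real) \<Rightarrow> (real \<Rightarrow> real) \<Rightarrow> bool" where
  "induced_by h g \<longleftrightarrow> homeo_plus h \<and> (\<forall>x\<in>{0..1}. h x = x \<or> h x = g x)"

definition gen_group :: "(real \<Rightarrow> real) set \<Rightarrow> (real \<Rightarrow> real) set" where
  "gen_group S = \<Inter> {H. homeo_group H \<and> S \<subseteq> H}"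

definition I_op :: "(real \<Rightarrow> real) set \<Rightarrow> (real \<Rightarrow> real) set" where
  "I_op G = gen_group {h. \<exists>g\<in>G. induced_by h g}"

definition I_infty :: "(real \<Rightarrow> real) set \<Rightarrow> (real \<Rightarrow> real) set" where
  "I_infty G = (\<Union>n. (I_op ^^ n) G)"

definition complete_group :: "(real \<Rightarrow> real) set \<Rightarrow> bool" where
  "complete_group G \<longleftrightarrow> homeo_group G \<and> no_linked_fixed_points G \<and>
     (\<forall>g\<in>G. \<forall>h. induced_by h g \<longrightarrow> h \<in> G)"

definition stab :: "(real \<Rightarrow> real) set \<Rightarrow> real \<Rightarrow> real \<Rightarrow> (real \<Rightarrow> real) set" where
  "stab H a b = {h \<in> H. h ` {a..b} = {a..b}}"

definition rel_transl_number ::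
    "(real \<Rightarrow> real) set \<Rightarrow> real \<Rightarrow> real \<Rightarrow> ((real \<Rightarrow> real) \<Rightarrow> real) \<Rightarrow> bool" where
  "rel_transl_number H a b \<tau> \<longleftrightarrow>
     (\<forall>g\<in>stab H a b. \<forall>h\<in>stab H a b. \<tau> (g \<circ> h) = \<tau> g + \<tau> h) \<and>
     (\<forall>g\<in>stab H a b. \<tau> g = 0 \<longleftrightarrow> (\<exists>x\<in>{a<..<b}. g x = x)) \<and>
     (\<forall>g\<in>stab H a b. \<tau> g > 0 \<longleftrightarrow> (\<forall>x\<in>{a<..<b}. g x > x))"

end

theory Submission
  imports Defs
begin

text \<open>An element w of I(K) is a word in homeomorphisms induced by elements of K, and such an
  induced homeomorphism agrees, on each interval between successive fixed points of an element
  of K, either with the identity or with that element.  When K has no linked fixed points these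
  K-intervals are nested or disjoint, and an element of K maps each of them onto itself or off
  itself.  Peeling the word off along maximal K-intervals shows: near any w-invariant interval X,
  w agrees with a single g \<in> K except on K-intervals not containing X, which w moves as g does.
  Taking X a component of the support of w shows that g has the same successive fixed points
  there, so successive fixed points of I(K) are those of K; taking X a K-interval stabilised by w,
  g stabilises it too and g\<inverse> w fixes a point of X, so w and g have the same relative
  translation number.\<close>

section \<open>Orientation-preserving homeomorphisms of the unit interval\<close>

lemma homeo_plus_mem_unit: "homeo_plus f \<Longrightarrow> x \<in> {0..1} \<Longrightarrow> f x \<in> {0..1}"
  unfolding homeo_plus_def by blast

lemma homeo_plus_outside: "homeo_plus f \<Longrightarrow> x \<notin> {0..1} \<Longrightarrow> f x = x"
  unfolding homeo_plus_def by blast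

lemma homeo_plus_continuous_on: "homeo_plus f \<Longrightarrow> continuous_on {0..1} f"
  unfolding homeo_plus_def by blast

lemma homeo_plus_strict_mono:
  assumes f: "homeo_plus f" shows "strict_mono f"
proof (rule strict_monoI)
  fix x y :: real assume xy: "x < y"
  have sm: "strict_mono_on {0..1} f" using f unfolding homeo_plus_def by blast
  consider "x \<in> {0..1}" "y \<in> {0..1}" | "x \<in> {0..1}" "y > 1" | "x < 0" "y \<in> {0..1}" | "x \<notin> {0..1}" "y \<notin> {0..1}"
    using xy by fastforce
  then show "f x < f y"
  proof cases
    case 1 then show ?thesis using sm xy by (simp add: strict_mono_on_def)
  next
    case 2 then show ?thesis using homeo_plus_mem_unit[OF f, of x] homeo_plus_outside[OF f, of y] by simp
  next
    case 3 then show ?thesis using homeo_plus_mem_unit[OF f, of y] homeo_plus_outside[OF f, of x] by simp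
  next
    case 4 then show ?thesis using homeo_plus_outside[OF f] xy by simp
  qed
qed

lemma homeo_plus_surj:
  assumes f: "homeo_plus f" shows "surj f"
proof -
  have "\<exists>y. f y = z" for z :: real
  proof (cases "z \<in> {0..1}")
    case True
    then have "z \<in> f ` {0..1}" using f unfolding homeo_plus_def by simp
    then show ?thesis by auto
  next
    case False then show ?thesis using homeo_plus_outside[OF f False] by auto
  qed
  then show ?thesis unfolding surj_def by metis
qed

lemma homeo_plus_bij: "homeo_plus f \<Longrightarrow> bij f"
  using homeo_plus_surj strict_mono_imp_inj_on[OF homeo_plus_strict_mono] by (auto simp: bij_def)

lemma homeo_plus_inv_f_f: "homeo_plus f \<Longrightarrow> inv f (f x) = x"
  by (simp add: homeo_plus_bij bij_is_inj inv_f_f)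

lemma homeo_plus_f_inv_f: "homeo_plus f \<Longrightarrow> f (inv f x) = x"
  by (simp add: homeo_plus_surj surj_f_inv_f)

lemma homeo_plus_less_iff: "homeo_plus f \<Longrightarrow> f x < f y \<longleftrightarrow> x < y"
  using homeo_plus_strict_mono strict_mono_less by metis

lemma homeo_plus_le_iff: "homeo_plus f \<Longrightarrow> f x \<le> f y \<longleftrightarrow> x \<le> y"
  using homeo_plus_strict_mono strict_mono_less_eq by metis

lemma homeo_plus_eq_iff: "homeo_plus f \<Longrightarrow> f x = f y \<longleftrightarrow> x = y"
  using homeo_plus_inv_f_f by metis

lemma homeo_plus_fixes_0:
  assumes f: "homeo_plus f" shows "f 0 = 0"
proof -
  obtain y where y: "y \<in> {0..1}" "f y = 0"
    using f unfolding homeo_plus_def by (metis atLeastAtMost_iff imageE order.refl zero_le_one)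
  then show ?thesis using homeo_plus_le_iff[OF f, of 0 y] homeo_plus_mem_unit[OF f, of 0] by auto
qed

lemma homeo_plus_fixes_1:
  assumes f: "homeo_plus f" shows "f 1 = 1"
proof -
  obtain y where y: "y \<in> {0..1}" "f y = 1"
    using f unfolding homeo_plus_def by (metis atLeastAtMost_iff imageE order.refl zero_le_one)
  then show ?thesis using homeo_plus_le_iff[OF f, of y 1] homeo_plus_mem_unit[OF f, of 1] by auto
qed

lemma homeo_plus_image_greaterThanLessThan:
  assumes f: "homeo_plus f" shows "f ` {c<..<d} = {f c<..<f d}"
proof
  show "f ` {c<..<d} \<subseteq> {f c<..<f d}" using homeo_plus_less_iff[OF f] by auto
  show "{f c<..<f d} \<subseteq> f ` {c<..<d}"
  proof
    fix z assume "z \<in> {f c<..<f d}"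
    then have "inv f z \<in> {c<..<d}"
      using homeo_plus_less_iff[OF f] homeo_plus_f_inv_f[OF f] by (metis greaterThanLessThan_iff)
    then show "z \<in> f ` {c<..<d}" using homeo_plus_f_inv_f[OF f] by (metis imageI)
  qed
qed

lemma homeo_plus_image_atLeastAtMost:
  assumes f: "homeo_plus f" shows "f ` {c..d} = {f c..f d}"
proof
  show "f ` {c..d} \<subseteq> {f c..f d}" using homeo_plus_le_iff[OF f] by auto
  show "{f c..f d} \<subseteq> f ` {c..d}"
  proof
    fix z assume "z \<in> {f c..f d}"
    then have "inv f z \<in> {c..d}"
      using homeo_plus_le_iff[OF f] homeo_plus_f_inv_f[OF f] by (metis atLeastAtMost_iff)
    then show "z \<in> f ` {c..d}" using homeo_plus_f_inv_f[OF f] by (metis imageI)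
  qed
qed

lemma homeo_plus_inv:
  assumes f: "homeo_plus f" shows "homeo_plus (inv f)"
proof -
  have img: "f ` {0..1} = {0..1}" using f unfolding homeo_plus_def by blast
  have "continuous_on (f ` {0..1}) (inv f)"
    by (rule continuous_on_inv[OF homeo_plus_continuous_on[OF f]]) (auto simp: homeo_plus_inv_f_f[OF f])
  then have "continuous_on {0..1} (inv f)" using img by simp
  moreover have "strict_mono (inv f)"
    by (metis f homeo_plus_f_inv_f homeo_plus_less_iff strict_monoI)
  moreover have "inv f ` {0..1} = {0..1}"
    using img by (metis f homeo_plus_bij bij_is_inj image_inv_f_f)
  moreover have "\<forall>x. x \<notin> {0..1} \<longrightarrow> inv f x = x"
    using homeo_plus_outside[OF f] by (metis f homeo_plus_inv_f_f)
  ultimately show ?thesis unfolding homeo_plus_def by (simp add: strict_mono_on_def strict_mono_def)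
qed

lemma homeo_plus_comp:
  assumes f: "homeo_plus f" and g: "homeo_plus g" shows "homeo_plus (f \<circ> g)"
proof -
  have ig: "g ` {0..1} = {0..1}" and iff: "f ` {0..1} = {0..1}"
    using f g unfolding homeo_plus_def by blast+
  have "continuous_on {0..1} (f \<circ> g)"
    by (rule continuous_on_compose)
      (use homeo_plus_continuous_on[OF f] homeo_plus_continuous_on[OF g] ig in auto)
  moreover have "strict_mono (f \<circ> g)"
    using homeo_plus_strict_mono[OF f] homeo_plus_strict_mono[OF g] by (simp add: strict_mono_def)
  moreover have "(f \<circ> g) ` {0..1} = {0..1}" using ig iff by (metis image_comp)
  ultimately show ?thesis unfolding homeo_plus_def using homeo_plus_outside[OF f] homeo_plus_outside[OF g]
    by (simp add: strict_mono_on_def strict_mono_def)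
qed

lemma homeo_plus_id: "homeo_plus id"
  unfolding homeo_plus_def by (simp add: strict_mono_on_def)

section \<open>Groups of homeomorphisms and words\<close>

lemma homeo_groupD:
  assumes "homeo_group G"
  shows homeo_group_homeo_plus: "g \<in> G \<Longrightarrow> homeo_plus g"
    and homeo_group_id: "id \<in> G"
    and homeo_group_comp: "f \<in> G \<Longrightarrow> g \<in> G \<Longrightarrow> f \<circ> g \<in> G"
    and homeo_group_inv: "g \<in> G \<Longrightarrow> inv g \<in> G"
  using assms unfolding homeo_group_def by blast+

lemma gen_group_least: "homeo_group H \<Longrightarrow> S \<subseteq> H \<Longrightarrow> gen_group S \<subseteq> H"
  unfolding gen_group_def by blast

lemma gen_group_superset: "S \<subseteq> gen_group S"
  unfolding gen_group_def by blast

lemma homeo_group_gen_group: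
  assumes "\<forall>f\<in>S. homeo_plus f" shows "homeo_group (gen_group S)"
proof -
  let ?F = "{H. homeo_group H \<and> S \<subseteq> H}"
  have "{f. homeo_plus f} \<in> ?F"
    using assms homeo_plus_comp homeo_plus_inv homeo_plus_id by (auto simp: homeo_group_def)
  then show ?thesis
    unfolding gen_group_def homeo_group_def[of "\<Inter>?F"] by (auto simp: homeo_group_def)
qed

definition comp_list :: "(real \<Rightarrow> real) list \<Rightarrow> real \<Rightarrow> real" where
  "comp_list hs = foldr (\<circ>) hs id"

lemma comp_list_Nil [simp]: "comp_list [] = id"
  by (simp add: comp_list_def)

lemma comp_list_Cons [simp]: "comp_list (h # hs) = h \<circ> comp_list hs"
  by (simp add: comp_list_def)

lemma comp_list_append: "comp_list (xs @ ys) = comp_list xs \<circ> comp_list ys"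
  by (induction xs) (auto simp: comp_assoc)

lemma homeo_plus_comp_list: "\<forall>h\<in>set hs. homeo_plus h \<Longrightarrow> homeo_plus (comp_list hs)"
  by (induction hs) (auto simp: homeo_plus_id homeo_plus_comp)

lemma inv_comp_list:
  "\<forall>h\<in>set hs. homeo_plus h \<Longrightarrow> inv (comp_list hs) = comp_list (rev (map inv hs))"
proof (induction hs)
  case (Cons h hs)
  have "inv (comp_list (h # hs)) = inv (comp_list hs) \<circ> inv h"
    unfolding comp_list_Cons using Cons.prems
    by (intro o_inv_distrib) (auto intro: homeo_plus_bij homeo_plus_comp_list)
  also have "\<dots> = comp_list (rev (map inv (h # hs)))"
    using Cons by (simp add: comp_list_append)
  finally show ?case .
qed (simp add: inv_id)

lemma comp_list_fixed: "\<forall>k\<in>set ks. k y = y \<Longrightarrow> comp_list ks y = y"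
  by (induction ks) auto

lemma comp_list_image: "\<forall>k\<in>set ks. k ` M = M \<Longrightarrow> comp_list ks ` M = M"
proof (induction ks)
  case (Cons k ks)
  then have "(k \<circ> comp_list ks) ` M = M" by (simp only: image_comp[symmetric]) simp
  then show ?case by simp
qed simp

lemma comp_list_conj:
  assumes u: "homeo_plus u"
  shows "comp_list (map (\<lambda>k. inv u \<circ> k \<circ> u) ks) = inv u \<circ> comp_list ks \<circ> u"
  by (induction ks) (auto simp: fun_eq_iff homeo_plus_inv_f_f[OF u] homeo_plus_f_inv_f[OF u])

definition induced_set :: "(real \<Rightarrow> real) set \<Rightarrow> (real \<Rightarrow> real) set" where
  "induced_set K = {h. \<exists>g\<in>K. induced_by h g}"

lemma induced_by_homeo_plus: "induced_by h g \<Longrightarrow> homeo_plus h"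
  unfolding induced_by_def by blast

lemma induced_by_inv:
  assumes g: "homeo_plus g" and h: "induced_by h g" shows "induced_by (inv h) (inv g)"
proof -
  have hh: "homeo_plus h" using induced_by_homeo_plus[OF h] .
  have "inv h x = x \<or> inv h x = inv g x" if x: "x \<in> {0..1}" for x
  proof -
    have "inv h x \<in> {0..1}" using homeo_plus_mem_unit[OF homeo_plus_inv[OF hh] x] .
    then have "h (inv h x) = inv h x \<or> h (inv h x) = g (inv h x)"
      using h unfolding induced_by_def by blast
    then show ?thesis using homeo_plus_f_inv_f[OF hh] homeo_plus_inv_f_f[OF g] by metis
  qed
  then show ?thesis unfolding induced_by_def using homeo_plus_inv[OF hh] by blast
qed

lemma homeo_plus_induced_set: "h \<in> induced_set K \<Longrightarrow> homeo_plus h"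
  unfolding induced_set_def using induced_by_homeo_plus by blast

lemma inv_mem_induced_set: "homeo_group K \<Longrightarrow> h \<in> induced_set K \<Longrightarrow> inv h \<in> induced_set K"
  unfolding induced_set_def using induced_by_inv homeo_group_homeo_plus homeo_group_inv by blast

lemma induced_set_superset: "homeo_group K \<Longrightarrow> K \<subseteq> induced_set K"
  unfolding induced_set_def induced_by_def using homeo_group_homeo_plus by blast

lemma I_op_eq: "I_op K = gen_group (induced_set K)"
  unfolding I_op_def induced_set_def by simp

lemma homeo_group_I_op: "homeo_group (I_op K)"
  unfolding I_op_eq using homeo_plus_induced_set by (blast intro: homeo_group_gen_group)

lemma I_op_superset: "homeo_group K \<Longrightarrow> K \<subseteq> I_op K"
  unfolding I_op_eq using induced_set_superset gen_group_superset by blast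

lemma I_op_comp_list:
  assumes K: "homeo_group K" and w: "w \<in> I_op K"
  obtains hs where "set hs \<subseteq> induced_set K" "w = comp_list hs"
proof -
  let ?W = "{comp_list hs | hs. set hs \<subseteq> induced_set K}"
  have "homeo_group ?W" unfolding homeo_group_def
  proof (intro conjI ballI)
    show "homeo_plus g" if "g \<in> ?W" for g
      using that homeo_plus_comp_list homeo_plus_induced_set by blast
    show "id \<in> ?W" by (intro CollectI exI[of _ "[]"]) simp
    show "f \<circ> g \<in> ?W" if "f \<in> ?W" "g \<in> ?W" for f g
      using that by clarify (metis comp_list_append set_append Un_least)
    show "inv g \<in> ?W" if g: "g \<in> ?W" for g
    proof -
      obtain xs where xs: "set xs \<subseteq> induced_set K" "g = comp_list xs" using g by blast
      then have "inv g = comp_list (rev (map inv xs))" using inv_comp_list homeo_plus_induced_set by blast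
      moreover have "set (rev (map inv xs)) \<subseteq> induced_set K" using xs inv_mem_induced_set[OF K] by auto
      ultimately show ?thesis by blast
    qed
  qed
  moreover have "induced_set K \<subseteq> ?W"
    by (intro subsetI CollectI, rule_tac x="[_]" in exI) auto
  ultimately have "I_op K \<subseteq> ?W" unfolding I_op_eq by (rule gen_group_least)
  then show ?thesis using w that by blast
qed

section \<open>Successive fixed points\<close>

definition successive_fixed :: "(real \<Rightarrow> real) \<Rightarrow> real \<Rightarrow> real \<Rightarrow> bool" where
  "successive_fixed f c d \<longleftrightarrow>
     0 \<le> c \<and> c < d \<and> d \<le> 1 \<and> f c = c \<and> f d = d \<and> (\<forall>y\<in>{c<..<d}. f y \<noteq> y)"

lemma in_components_nonfixed_iff:
  assumes cd: "c < d"
  shows "{c<..<d} \<in> components ({0..1} - fixset f) \<longleftrightarrow> successive_fixed f c d"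
proof
  let ?S = "{0..1} - fixset f"
  assume C: "{c<..<d} \<in> components ?S"
  then have sub: "{c<..<d} \<subseteq> ?S"
    and mx: "\<And>D. D \<noteq> {} \<Longrightarrow> {c<..<d} \<subseteq> D \<Longrightarrow> D \<subseteq> ?S \<Longrightarrow> connected D \<Longrightarrow> D = {c<..<d}"
    unfolding in_components_maximal by blast+
  have inside: "\<And>y. c < y \<Longrightarrow> y < d \<Longrightarrow> 0 \<le> y \<and> y \<le> 1 \<and> f y \<noteq> y"
    using sub unfolding fixset_def by auto
  have c0: "0 \<le> c"
  proof (rule ccontr)
    assume "\<not> 0 \<le> c"
    then have "c < (c + min d 0)/2" "(c + min d 0)/2 < d" "(c + min d 0)/2 < 0" using cd by auto
    then show False using inside[of "(c + min d 0)/2"] by linarith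
  qed
  have d1: "d \<le> 1"
  proof (rule ccontr)
    assume "\<not> d \<le> 1"
    then have "c < (d + max c 1)/2" "(d + max c 1)/2 < d" "(d + max c 1)/2 > 1" using cd by auto
    then show False using inside[of "(d + max c 1)/2"] by linarith
  qed
  have fc: "f c = c"
  proof (rule ccontr)
    assume ne: "f c \<noteq> c"
    have "{c..<d} \<subseteq> ?S"
      using inside ne c0 d1 unfolding fixset_def by (auto simp: order.order_iff_strict)
    then have "{c..<d} = {c<..<d}" by (intro mx) (use cd in auto)
    then show False using cd by (metis atLeastLessThan_iff greaterThanLessThan_iff order_refl less_irrefl)
  qed
  have fd: "f d = d"
  proof (rule ccontr)
    assume ne: "f d \<noteq> d"
    have "{c<..d} \<subseteq> ?S"
      using inside ne c0 d1 cd unfolding fixset_def by (auto simp: order.order_iff_strict)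
    then have "{c<..d} = {c<..<d}" by (intro mx) (use cd in auto)
    then show False using cd by (metis greaterThanAtMost_iff greaterThanLessThan_iff order_refl less_irrefl)
  qed
  show "successive_fixed f c d" unfolding successive_fixed_def using c0 d1 fc fd cd inside by auto
next
  let ?S = "{0..1} - fixset f"
  assume "successive_fixed f c d"
  then have c0: "0 \<le> c" and d1: "d \<le> 1" and fc: "f c = c" and fd: "f d = d"
    and ff: "\<forall>y\<in>{c<..<d}. f y \<noteq> y" unfolding successive_fixed_def by auto
  show "{c<..<d} \<in> components ?S"
    unfolding in_components_maximal
  proof (intro conjI allI impI)
    show "{c<..<d} \<noteq> {}" using cd by auto
    show "{c<..<d} \<subseteq> ?S" using ff c0 d1 unfolding fixset_def by auto
    show "connected {c<..<d}" by simp
    fix D assume D: "D \<noteq> {} \<and> {c<..<d} \<subseteq> D \<and> D \<subseteq> ?S \<and> connected D"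
    then have iv: "\<And>a b x. a \<in> D \<Longrightarrow> b \<in> D \<Longrightarrow> a \<le> x \<Longrightarrow> x \<le> b \<Longrightarrow> x \<in> D"
      using is_interval_connected_1 is_interval_1 by blast
    have "(c+d)/2 \<in> {c<..<d}" using cd by auto
    then have m: "(c+d)/2 \<in> D" using D by blast
    have cD: "c \<notin> D" "d \<notin> D" using D fc fd c0 d1 cd unfolding fixset_def by auto
    have "D \<subseteq> {c<..<d}"
    proof
      fix y assume y: "y \<in> D"
      have "\<not> y \<ge> d" using iv[OF m y, of d] cD cd by auto
      moreover have "\<not> y \<le> c" using iv[OF y m, of c] cD cd by auto
      ultimately show "y \<in> {c<..<d}" by auto
    qed
    then show "D = {c<..<d}" using D by blast
  qed
qed

lemma succ_pair_iff: "succ_pair K c d \<longleftrightarrow> (\<exists>f\<in>K. successive_fixed f c d)"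
  unfolding succ_pair_def using in_components_nonfixed_iff successive_fixed_def by blast

lemma succ_pair_mono: "K \<subseteq> K' \<Longrightarrow> succ_pair K a b \<Longrightarrow> succ_pair K' a b"
  unfolding succ_pair_iff by blast

lemma successive_fixed_unique:
  assumes "successive_fixed g c d" "successive_fixed g c' d'" "{c<..<d} \<inter> {c'<..<d'} \<noteq> {}"
  shows "c = c' \<and> d = d'"
proof -
  obtain x where "x \<in> {c<..<d} \<inter> {c'<..<d'}" using assms(3) by blast
  then have x: "c < x" "x < d" "c' < x" "x < d'" by auto
  have "\<not> c < c'" "\<not> c' < c" "\<not> d < d'" "\<not> d' < d"
    using assms(1,2) x unfolding successive_fixed_def by (metis greaterThanLessThan_iff less_trans)+
  then show ?thesis by linarith
qed

text \<open>The ends are the last fixed point below x and the first one above x, which exist since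
  the fixed-point set is closed.\<close>

lemma successive_fixed_around:
  assumes f: "homeo_plus f" and x: "x \<in> {0..1}" and fx: "f x \<noteq> x"
  obtains c d where "c < x" "x < d" "successive_fixed f c d"
proof -
  have cont: "continuous_on {0..1} (\<lambda>y. f y - y)"
    using homeo_plus_continuous_on[OF f] by (intro continuous_intros)
  let ?A = "{y \<in> {0..x}. f y - y = 0}"
  let ?B = "{y \<in> {x..1}. f y - y = 0}"
  have cA: "closed ?A" and cB: "closed ?B"
    by (rule continuous_closed_preimage_constant; use cont x in \<open>auto intro: continuous_on_subset\<close>)+
  have bA: "bdd_above ?A" by (rule bdd_aboveI[of _ x]) auto
  have bB: "bdd_below ?B" by (rule bdd_belowI[of _ x]) auto
  define c where "c = Sup ?A"
  define d where "d = Inf ?B"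
  have cin: "c \<in> ?A" unfolding c_def
    using closed_contains_Sup[OF _ bA cA] homeo_plus_fixes_0[OF f] x by auto
  have din: "d \<in> ?B" unfolding d_def
    using closed_contains_Inf[OF _ bB cB] homeo_plus_fixes_1[OF f] x by auto
  have cx: "c < x" using cin fx by (cases "c = x") auto
  have dx: "x < d" using din fx by (cases "d = x") auto
  have "f y \<noteq> y" if y: "y \<in> {c<..<d}" for y
  proof
    assume fy: "f y = y"
    show False
    proof (cases "y \<le> x")
      case True
      then have "y \<le> c" unfolding c_def using fy y cin by (intro cSup_upper[OF _ bA]) auto
      then show False using y by auto
    next
      case False
      then have "d \<le> y" unfolding d_def using fy y din by (intro cInf_lower[OF _ bB]) auto
      then show False using y by auto
    qed
  qed
  then have "successive_fixed f c d" unfolding successive_fixed_def using cin din cx dx by auto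
  then show ?thesis using that cx dx by blast
qed

lemma successive_fixed_conj:
  assumes u: "homeo_plus u" and f: "successive_fixed f c d"
  shows "successive_fixed (u \<circ> f \<circ> inv u) (u c) (u d)"
proof -
  from f have c0: "0 \<le> c" and cd: "c < d" and d1: "d \<le> 1" and fc: "f c = c" and fd: "f d = d"
    and ff: "\<forall>y\<in>{c<..<d}. f y \<noteq> y" unfolding successive_fixed_def by auto
  have "u c \<in> {0..1}" "u d \<in> {0..1}" using homeo_plus_mem_unit[OF u] c0 cd d1 by auto
  moreover have "u c < u d" using cd homeo_plus_less_iff[OF u] by auto
  moreover have "(u \<circ> f \<circ> inv u) (u c) = u c" "(u \<circ> f \<circ> inv u) (u d) = u d"
    using fc fd homeo_plus_inv_f_f[OF u] by auto
  moreover have "(u \<circ> f \<circ> inv u) y \<noteq> y" if y: "y \<in> {u c<..<u d}" for y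
  proof -
    have "inv u y \<in> {c<..<d}"
      using y homeo_plus_less_iff[OF u, of c "inv u y"] homeo_plus_less_iff[OF u, of "inv u y" d]
        homeo_plus_f_inv_f[OF u] by auto
    then have "u (f (inv u y)) \<noteq> u (inv u y)" using ff homeo_plus_eq_iff[OF u] by blast
    then show ?thesis using homeo_plus_f_inv_f[OF u] by simp
  qed
  ultimately show ?thesis unfolding successive_fixed_def by auto
qed

lemma succ_pair_image:
  assumes K: "homeo_group K" and u: "u \<in> K" and s: "succ_pair K c d"
  shows "succ_pair K (u c) (u d)"
proof -
  obtain f where f: "f \<in> K" "successive_fixed f c d" using s unfolding succ_pair_iff by blast
  have "u \<circ> f \<circ> inv u \<in> K" using K u f homeo_group_comp homeo_group_inv by blast
  then show ?thesis
    unfolding succ_pair_iff using successive_fixed_conj[OF homeo_group_homeo_plus[OF K u] f(2)] by blast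
qed

lemma card_Int_doubleton_eq_1:
  assumes "x \<noteq> y" shows "card (A \<inter> {x, y}) = 1 \<longleftrightarrow> (x \<in> A) \<noteq> (y \<in> A)"
proof -
  have "A \<inter> {x, y} = (if x \<in> A then {x} else {}) \<union> (if y \<in> A then {y} else {})" by auto
  then show ?thesis using assms by (auto simp: card_insert_if)
qed

lemma not_linked_cases:
  assumes "c < d" "c' < d'" "\<not> linked c d c' d'"
  shows "(c = c' \<and> d = d') \<or> d \<le> c' \<or> d' \<le> c \<or> (c < c' \<and> d' < d) \<or> (c' < c \<and> d < d')"
proof -
  have "(c < c' \<and> c' < d) = (c < d' \<and> d' < d)" and "(c' < c \<and> c < d') = (c' < d \<and> d < d')"
    using assms card_Int_doubleton_eq_1[of c' d'] card_Int_doubleton_eq_1[of c d]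
    unfolding linked_def greaterThanLessThan_iff by auto
  then show ?thesis using assms(1,2) by linarith
qed

lemma succ_pairs_not_linked:
  assumes "no_linked_fixed_points K" "succ_pair K c d" "succ_pair K c' d'"
  shows "(c = c' \<and> d = d') \<or> d \<le> c' \<or> d' \<le> c \<or> (c < c' \<and> d' < d) \<or> (c' < c \<and> d < d')"
  using assms not_linked_cases unfolding no_linked_fixed_points_def succ_pair_def by blast

section \<open>Intervals between successive fixed points\<close>

definition succ_intervals :: "(real \<Rightarrow> real) set \<Rightarrow> real set set" where
  "succ_intervals K = {{c<..<d} | c d. succ_pair K c d}"

lemma succ_intervalsI: "succ_pair K c d \<Longrightarrow> {c<..<d} \<in> succ_intervals K"
  unfolding succ_intervals_def by blast

lemma succ_intervalsE:
  assumes "A \<in> succ_intervals K"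
  obtains c d f where "A = {c<..<d}" "f \<in> K" "successive_fixed f c d" "succ_pair K c d"
  using assms unfolding succ_intervals_def succ_pair_iff by blast

lemma succ_interval_nonempty: "A \<in> succ_intervals K \<Longrightarrow> A \<noteq> {}"
  by (erule succ_intervalsE) (auto simp: successive_fixed_def)

lemma succ_intervals_image:
  assumes K: "homeo_group K" and u: "u \<in> K" and A: "A \<in> succ_intervals K"
  shows "u ` A \<in> succ_intervals K"
proof -
  obtain c d f where "A = {c<..<d}" "succ_pair K c d" using A by (rule succ_intervalsE)
  then show ?thesis
    using homeo_plus_image_greaterThanLessThan[OF homeo_group_homeo_plus[OF K u]]
      succ_pair_image[OF K u] succ_intervalsI by metis
qed

lemma succ_intervals_nested:
  assumes NL: "no_linked_fixed_points K" and A: "A \<in> succ_intervals K" and B: "B \<in> succ_intervals K"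
    and AB: "A \<inter> B \<noteq> {}"
  shows "A \<subseteq> B \<or> B \<subseteq> A"
proof -
  obtain a b f where a: "A = {a<..<b}" "succ_pair K a b" using A by (rule succ_intervalsE)
  obtain c e f where c: "B = {c<..<e}" "succ_pair K c e" using B by (rule succ_intervalsE)
  obtain x where "x \<in> A" "x \<in> B" using AB by blast
  then have x: "a < x" "x < b" "c < x" "x < e" using a(1) c(1) by auto
  from succ_pairs_not_linked[OF NL a(2) c(2)] show ?thesis
  proof (elim disjE)
    assume "a < c \<and> e < b" then show ?thesis unfolding a(1) c(1) by auto
  next
    assume "c < a \<and> b < e" then show ?thesis unfolding a(1) c(1) by auto
  qed (use x a(1) c(1) in auto)
qed

lemma greaterThanLessThan_inject:
  fixes c e x y :: real
  assumes "c < e" "{x<..<y} = {c<..<e}" shows "x = c \<and> y = e"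
proof -
  have "x < y" using assms by (metis greaterThanLessThan_empty_iff2 greaterThanLessThan_empty_iff not_less)
  then show ?thesis using assms greaterThanLessThan_subseteq_greaterThanLessThan
    by (metis order.antisym order_refl)
qed

lemma homeo_plus_fixes_ends:
  assumes f: "homeo_plus f" and ab: "a < b" and img: "f ` {a<..<b} = {a<..<b}"
  shows "f a = a \<and> f b = b"
  using greaterThanLessThan_inject[OF ab] img homeo_plus_image_greaterThanLessThan[OF f] by metis

text \<open>Otherwise g has a fixed point in (c, d) by the intermediate value theorem, and the
  component of the non-fixed set of g around c is linked with (c, d).\<close>

lemma succ_pair_not_squeezed:
  assumes NL: "no_linked_fixed_points K" and K: "homeo_group K" and g: "g \<in> K"
    and s: "succ_pair K c d"
  shows "\<not> (c < g c \<and> g d < d)"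
proof
  assume lt: "c < g c \<and> g d < d"
  have gh: "homeo_plus g" using homeo_group_homeo_plus[OF K g] .
  obtain f where "f \<in> K" "successive_fixed f c d" using s unfolding succ_pair_iff by blast
  then have c0: "0 \<le> c" and cd: "c < d" and d1: "d \<le> 1" unfolding successive_fixed_def by auto
  have "continuous_on {c..d} (\<lambda>y. g y - y)"
    using homeo_plus_continuous_on[OF gh] c0 d1 by (intro continuous_intros) (auto intro: continuous_on_subset)
  then obtain z where z: "c \<le> z" "z \<le> d" "g z - z = 0"
    using IVT2'[of "\<lambda>y. g y - y" d 0 c] lt cd by auto
  have zc: "c < z" and zd: "z < d" using z lt by (auto simp: order.order_iff_strict)
  obtain c1 d1 where cc: "c1 < c" "c < d1" "successive_fixed g c1 d1"
    using successive_fixed_around[OF gh, of c] c0 cd d1 lt by auto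
  have "d1 \<le> z"
  proof (rule ccontr)
    assume "\<not> d1 \<le> z"
    then have "z \<in> {c1<..<d1}" using cc zc by auto
    then show False using cc(3) z(3) unfolding successive_fixed_def by auto
  qed
  moreover have "succ_pair K c1 d1" unfolding succ_pair_iff using cc(3) g by blast
  then have "(c = c1 \<and> d = d1) \<or> d \<le> c1 \<or> d1 \<le> c \<or> (c < c1 \<and> d1 < d) \<or> (c1 < c \<and> d < d1)"
    by (rule succ_pairs_not_linked[OF NL s])
  ultimately show False using cc(1,2) zd cd by linarith
qed

lemma succ_interval_image_eq_or_disjoint:
  assumes K: "homeo_group K" and NL: "no_linked_fixed_points K" and g: "g \<in> K"
    and A: "A \<in> succ_intervals K"
  shows "g ` A = A \<or> g ` A \<inter> A = {}"
proof -
  have gh: "homeo_plus g" using homeo_group_homeo_plus[OF K g] .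
  obtain c d f where a: "A = {c<..<d}" "succ_pair K c d" using A by (rule succ_intervalsE)
  have ga: "g ` A = {g c<..<g d}" using a(1) homeo_plus_image_greaterThanLessThan[OF gh] by simp
  have "\<not> (g c < c \<and> d < g d)"
    using succ_pair_not_squeezed[OF NL K homeo_group_inv[OF K g] a(2)]
      homeo_plus_less_iff[OF homeo_plus_inv[OF gh]] homeo_plus_inv_f_f[OF gh] by metis
  then have "(c = g c \<and> d = g d) \<or> d \<le> g c \<or> g d \<le> c"
    using succ_pairs_not_linked[OF NL a(2) succ_pair_image[OF K g a(2)]]
      succ_pair_not_squeezed[OF NL K g a(2)] by blast
  then show ?thesis using ga a(1) by auto
qed

section \<open>Patches\<close>

definition patch_family ::
    "(real \<Rightarrow> real) set \<Rightarrow> real set \<Rightarrow> (real \<Rightarrow> real) \<Rightarrow> real set set \<Rightarrow> bool" where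
  "patch_family K J k F \<longleftrightarrow> F \<subseteq> succ_intervals K \<and> (\<forall>A\<in>F. A \<subseteq> J) \<and> disjoint F
     \<and> (\<forall>y\<in>J - \<Union>F. k y = y) \<and> (\<forall>A\<in>F. \<exists>u\<in>K. u ` A = A \<and> (\<forall>y\<in>A. k y = u y))"

definition patch :: "(real \<Rightarrow> real) set \<Rightarrow> real set \<Rightarrow> (real \<Rightarrow> real) \<Rightarrow> bool" where
  "patch K J k \<longleftrightarrow> (\<exists>F. patch_family K J k F)"

lemma patch_familyD:
  assumes P: "patch_family K J k F"
  shows patch_family_succ_intervals: "F \<subseteq> succ_intervals K"
    and patch_family_subset: "A \<in> F \<Longrightarrow> A \<subseteq> J"
    and patch_family_disjoint: "A \<in> F \<Longrightarrow> B \<in> F \<Longrightarrow> A \<inter> B \<noteq> {} \<Longrightarrow> A = B"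
    and patch_family_fixed: "y \<in> J \<Longrightarrow> y \<notin> \<Union>F \<Longrightarrow> k y = y"
    and patch_family_agrees: "A \<in> F \<Longrightarrow> \<exists>u\<in>K. u ` A = A \<and> (\<forall>y\<in>A. k y = u y)"
proof -
  note P' = P[unfolded patch_family_def]
  show "F \<subseteq> succ_intervals K" using P' by (rule conjunct1)
  show "A \<in> F \<Longrightarrow> A \<subseteq> J" using P' by blast
  show "A \<in> F \<Longrightarrow> B \<in> F \<Longrightarrow> A \<inter> B \<noteq> {} \<Longrightarrow> A = B" using P' disjointD by metis
  show "y \<in> J \<Longrightarrow> y \<notin> \<Union>F \<Longrightarrow> k y = y" using P' by blast
  show "A \<in> F \<Longrightarrow> \<exists>u\<in>K. u ` A = A \<and> (\<forall>y\<in>A. k y = u y)" using P' by blast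
qed

text \<open>By the intermediate value theorem applied to (h y - y) / (g y - y), which takes only
  the values 0 and 1.\<close>

lemma induced_by_on_component:
  assumes g: "homeo_plus g" and h: "induced_by h g" and F: "successive_fixed g c d"
  shows "(\<forall>y\<in>{c<..<d}. h y = g y) \<or> (\<forall>y\<in>{c<..<d}. h y = y)"
proof (rule ccontr)
  assume "\<not> ?thesis"
  then obtain y1 y2 where y1: "y1 \<in> {c<..<d}" "h y1 \<noteq> g y1" and y2: "y2 \<in> {c<..<d}" "h y2 \<noteq> y2"
    by blast
  have hh: "homeo_plus h" using induced_by_homeo_plus[OF h] .
  from F have c0: "0 \<le> c" and d1: "d \<le> 1" and ff: "\<forall>y\<in>{c<..<d}. g y \<noteq> y"
    unfolding successive_fixed_def by auto
  have ind: "h y = y \<or> h y = g y" if "y \<in> {c<..<d}" for y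
    using h c0 d1 that unfolding induced_by_def by auto
  define \<psi> where "\<psi> y = (h y - y) / (g y - y)" for y
  have "h y1 = y1" "h y2 = g y2" using ind[OF y1(1)] ind[OF y2(1)] y1(2) y2(2) by auto
  then have p1: "\<psi> y1 = 0" and p2: "\<psi> y2 = 1"
    unfolding \<psi>_def using ff y2(1) by auto
  let ?I = "{min y1 y2..max y1 y2}"
  have sub: "?I \<subseteq> {0..1}" "?I \<subseteq> {c<..<d}" using y1(1) y2(1) c0 d1 by auto
  have "continuous_on ?I \<psi>"
    unfolding \<psi>_def using ff sub continuous_on_subset[OF homeo_plus_continuous_on[OF hh] sub(1)]
      continuous_on_subset[OF homeo_plus_continuous_on[OF g] sub(1)]
    by (intro continuous_intros) auto
  then obtain z where z: "z \<in> ?I" "\<psi> z = 1/2"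
    using IVT'[of \<psi> y1 "1/2" y2] IVT2'[of \<psi> y1 "1/2" y2] p1 p2 by (cases "y1 \<le> y2") auto
  then have zcd: "z \<in> {c<..<d}" using sub by blast
  then have "\<psi> z = 0 \<or> \<psi> z = 1" unfolding \<psi>_def using ind[OF zcd] ff by auto
  then show False using z(2) by simp
qed

lemma induced_by_patch:
  assumes K: "homeo_group K" and g: "g \<in> K" and h: "induced_by h g"
  shows "patch K {0<..<1} h"
proof -
  have gh: "homeo_plus g" using homeo_group_homeo_plus[OF K g] .
  define F where "F = {{c<..<d} | c d. successive_fixed g c d \<and> (\<forall>y\<in>{c<..<d}. h y = g y)}"
  have "patch_family K {0<..<1} h F" unfolding patch_family_def
  proof (intro conjI ballI)
    show "F \<subseteq> succ_intervals K" unfolding F_def succ_intervals_def succ_pair_iff using g by blast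
    show "A \<subseteq> {0<..<1}" if "A \<in> F" for A using that unfolding F_def successive_fixed_def by auto
    show "disjoint F"
    proof (rule disjointI)
      fix A B assume "A \<in> F" "B \<in> F" "A \<noteq> B"
      then obtain c d c' d' where "A = {c<..<d}" "B = {c'<..<d'}"
        "successive_fixed g c d" "successive_fixed g c' d'" unfolding F_def by blast
      then show "A \<inter> B = {}" using successive_fixed_unique \<open>A \<noteq> B\<close> by blast
    qed
    show "h y = y" if y: "y \<in> {0<..<1} - \<Union>F" for y
    proof (cases "g y = y")
      case True then show ?thesis using h y unfolding induced_by_def by auto
    next
      case False
      then obtain c d where cd: "c < y" "y < d" "successive_fixed g c d"
        using successive_fixed_around[OF gh, of y] y by auto
      then have "{c<..<d} \<notin> F" using y by auto
      then show ?thesis using induced_by_on_component[OF gh h cd(3)] cd unfolding F_def by auto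
    qed
    show "\<exists>u\<in>K. u ` A = A \<and> (\<forall>y\<in>A. h y = u y)" if "A \<in> F" for A
    proof -
      obtain c d where A: "A = {c<..<d}" "successive_fixed g c d" "\<forall>y\<in>{c<..<d}. h y = g y"
        using \<open>A \<in> F\<close> unfolding F_def by blast
      have "g ` A = A" using A homeo_plus_image_greaterThanLessThan[OF gh] unfolding successive_fixed_def by simp
      then show ?thesis using A g by blast
    qed
  qed
  then show ?thesis unfolding patch_def by blast
qed

lemma subset_maximal_succ_interval:
  assumes NL: "no_linked_fixed_points K" and M: "M \<in> succ_intervals K"
    and F: "F \<subseteq> succ_intervals K" and mx: "\<forall>B\<in>F. M \<subseteq> B \<longrightarrow> M = B"
    and B: "B \<in> F" and BM: "B \<inter> M \<noteq> {}"
  shows "B \<subseteq> M"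
  using succ_intervals_nested[OF NL _ M BM] B F mx by blast

lemma patch_family_maximal_image:
  assumes NL: "no_linked_fixed_points K" and P: "patch_family K J k F"
    and M: "M \<in> succ_intervals K" and MJ: "M \<subseteq> J" and mx: "\<forall>B\<in>F. M \<subseteq> B \<longrightarrow> M = B"
  shows "k ` M = M"
proof -
  have inside: "B \<subseteq> M" if "B \<in> F" "y \<in> B" "y \<in> M" for B y
    using subset_maximal_succ_interval[OF NL M patch_family_succ_intervals[OF P] mx] that by blast
  have "k ` M \<subseteq> M"
  proof
    fix z assume "z \<in> k ` M"
    then obtain y where y: "y \<in> M" "z = k y" by blast
    show "z \<in> M"
    proof (cases "y \<in> \<Union>F")
      case False then show ?thesis using patch_family_fixed[OF P] y MJ by auto
    next
      case True
      then obtain B where B: "B \<in> F" "y \<in> B" by blast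
      obtain u where "u ` B = B" "\<forall>y\<in>B. k y = u y" using patch_family_agrees[OF P B(1)] by blast
      then have "z \<in> B" using B(2) y(2) by blast
      then show ?thesis using inside[OF B y(1)] by blast
    qed
  qed
  moreover have "M \<subseteq> k ` M"
  proof
    fix z assume z: "z \<in> M"
    show "z \<in> k ` M"
    proof (cases "z \<in> \<Union>F")
      case False then show ?thesis using patch_family_fixed[OF P] z MJ by (metis imageI subsetD)
    next
      case True
      then obtain B where B: "B \<in> F" "z \<in> B" by blast
      obtain u where u: "u ` B = B" "\<forall>y\<in>B. k y = u y" using patch_family_agrees[OF P B(1)] by blast
      obtain y where "y \<in> B" "z = u y" using u(1) B(2) by blast
      then have "z = k y" "y \<in> M" using u(2) inside[OF B z] by auto
      then show ?thesis by blast
    qed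
  qed
  ultimately show ?thesis by blast
qed

lemma patch_family_restrict:
  assumes NL: "no_linked_fixed_points K" and P: "patch_family K J k F"
    and M: "M \<in> succ_intervals K" and MJ: "M \<subseteq> J" and mx: "\<forall>B\<in>F. M \<subseteq> B \<longrightarrow> M = B"
  shows "patch_family K M k {B\<in>F. B \<subseteq> M}"
  unfolding patch_family_def
proof (intro conjI ballI)
  show "{B \<in> F. B \<subseteq> M} \<subseteq> succ_intervals K" using patch_family_succ_intervals[OF P] by auto
  show "disjoint {B \<in> F. B \<subseteq> M}" using P unfolding patch_family_def unfolding disjoint_def by (auto intro: pairwise_subset)
  show "k y = y" if y: "y \<in> M - \<Union>{B \<in> F. B \<subseteq> M}" for y
  proof -
    have "y \<notin> \<Union>F"
      using subset_maximal_succ_interval[OF NL M patch_family_succ_intervals[OF P] mx] y by blast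
    then show ?thesis using patch_family_fixed[OF P] y MJ by auto
  qed
qed (use patch_family_agrees[OF P] in auto)

lemma patch_family_conj:
  assumes K: "homeo_group K" and P: "patch_family K M k F" and u: "u \<in> K" and uM: "u ` M = M"
  shows "patch_family K M (inv u \<circ> k \<circ> u) ((\<lambda>B. inv u ` B) ` F)"
  unfolding patch_family_def
proof (intro conjI ballI)
  have uh: "homeo_plus u" using homeo_group_homeo_plus[OF K u] .
  have iu: "inv u \<in> K" using homeo_group_inv[OF K u] .
  have inv_image: "y \<in> inv u ` B \<longleftrightarrow> u y \<in> B" for B y
    by (metis homeo_plus_f_inv_f[OF uh] homeo_plus_inv_f_f[OF uh] image_iff)
  show "(\<lambda>B. inv u ` B) ` F \<subseteq> succ_intervals K"
    using patch_family_succ_intervals[OF P] succ_intervals_image[OF K iu] by blast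
  show "A \<subseteq> M" if A: "A \<in> (\<lambda>B. inv u ` B) ` F" for A
  proof
    fix y assume y: "y \<in> A"
    obtain B where B: "B \<in> F" "A = inv u ` B" using A by blast
    have "u y \<in> B" using y unfolding B(2) inv_image .
    then have "u y \<in> u ` M" using patch_family_subset[OF P B(1)] uM by blast
    then obtain m where "m \<in> M" "u y = u m" by blast
    then show "y \<in> M" using homeo_plus_eq_iff[OF uh] by simp
  qed
  show "disjoint ((\<lambda>B. inv u ` B) ` F)"
  proof (rule disjointI)
    fix A B assume "A \<in> (\<lambda>B. inv u ` B) ` F" "B \<in> (\<lambda>B. inv u ` B) ` F" "A \<noteq> B"
    then obtain A' B' where AB: "A' \<in> F" "B' \<in> F" "A = inv u ` A'" "B = inv u ` B'" "A' \<noteq> B'"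
      by blast
    then have "A' \<inter> B' = {}" using patch_family_disjoint[OF P] by blast
    then show "A \<inter> B = {}" unfolding AB(3,4) disjoint_iff inv_image by blast
  qed
  show "(inv u \<circ> k \<circ> u) y = y" if y: "y \<in> M - \<Union>((\<lambda>B. inv u ` B) ` F)" for y
  proof -
    have "u y \<in> M" using y uM by blast
    moreover have "u y \<notin> \<Union>F" using y by (auto simp: inv_image)
    ultimately show ?thesis using patch_family_fixed[OF P] homeo_plus_inv_f_f[OF uh] by simp
  qed
  show "\<exists>v\<in>K. v ` A = A \<and> (\<forall>y\<in>A. (inv u \<circ> k \<circ> u) y = v y)" if A: "A \<in> (\<lambda>B. inv u ` B) ` F" for A
  proof -
    obtain B where B: "B \<in> F" "A = inv u ` B" using A by blast
    obtain v where v: "v \<in> K" "v ` B = B" "\<forall>y\<in>B. k y = v y" using patch_family_agrees[OF P B(1)] by blast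
    have uA: "u ` A = B" unfolding B(2) by (simp add: image_image homeo_plus_f_inv_f[OF uh])
    have "(inv u \<circ> v \<circ> u) ` A = inv u ` (v ` (u ` A))" by (simp add: image_comp)
    also have "\<dots> = A" using uA v(2) B(2) by simp
    finally have "(inv u \<circ> v \<circ> u) ` A = A" .
    moreover have "(inv u \<circ> k \<circ> u) y = (inv u \<circ> v \<circ> u) y" if "y \<in> A" for y
    proof -
      have "u y \<in> B" using that uA by blast
      then show ?thesis using v(3) by simp
    qed
    moreover have "inv u \<circ> v \<circ> u \<in> K" using homeo_group_comp[OF K homeo_group_comp[OF K iu v(1)] u] .
    ultimately show ?thesis by blast
  qed
qed

section \<open>Local models of words of patches\<close>

lemma maximal_in_disjoint_families:
  assumes fin: "finite I"
    and dis: "\<And>i A B. i \<in> I \<Longrightarrow> A \<in> F i \<Longrightarrow> B \<in> F i \<Longrightarrow> A \<inter> B \<noteq> {} \<Longrightarrow> A = B"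
    and A: "A \<in> \<Union>(F ` I)" and ne: "A \<noteq> {}"
  obtains M where "M \<in> \<Union>(F ` I)" "A \<subseteq> M" "\<forall>B\<in>\<Union>(F ` I). M \<subseteq> B \<longrightarrow> M = B"
proof -
  let ?S = "{B \<in> \<Union>(F ` I). A \<subseteq> B}"
  have "finite {B \<in> F i. A \<subseteq> B}" if i: "i \<in> I" for i
  proof (cases "\<exists>B0 \<in> F i. A \<subseteq> B0")
    case True
    then obtain B0 where B0: "B0 \<in> F i" "A \<subseteq> B0" by blast
    have "{B \<in> F i. A \<subseteq> B} \<subseteq> {B0}"
    proof
      fix B assume B: "B \<in> {B \<in> F i. A \<subseteq> B}"
      then have "B \<inter> B0 \<noteq> {}" using B0(2) ne by blast
      then show "B \<in> {B0}" using dis[OF i _ B0(1)] B by blast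
    qed
    then show ?thesis by (rule finite_subset) simp
  next
    case False
    then have "{B \<in> F i. A \<subseteq> B} = {}" by blast
    then show ?thesis by (simp only: finite.emptyI)
  qed
  moreover have "?S = (\<Union>i\<in>I. {B \<in> F i. A \<subseteq> B})" by blast
  ultimately have finS: "finite ?S" using fin by (simp only: finite_UN_I)
  have "A \<in> ?S" using A by blast
  from finite_has_maximal2[OF finS this]
  obtain M where M: "M \<in> ?S" "\<forall>B\<in>?S. M \<subseteq> B \<longrightarrow> M = B" by blast
  have "\<forall>B\<in>\<Union>(F ` I). M \<subseteq> B \<longrightarrow> M = B"
  proof (intro ballI impI)
    fix B assume "B \<in> \<Union>(F ` I)" "M \<subseteq> B"
    then have "B \<in> ?S" using M(1) by blast
    then show "M = B" using M(2) \<open>M \<subseteq> B\<close> by blast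
  qed
  then show ?thesis using that M(1) by blast
qed

text \<open>Near X, w looks like the element g of K, up to K-intervals which w moves as g does.\<close>

definition local_model ::
    "(real \<Rightarrow> real) set \<Rightarrow> (real \<Rightarrow> real) \<Rightarrow> real set \<Rightarrow> real \<Rightarrow> real \<Rightarrow> (real \<Rightarrow> real)
      \<Rightarrow> real set set \<Rightarrow> bool" where
  "local_model K w X a b g M \<longleftrightarrow> a < b \<and> X \<subseteq> {a<..<b} \<and> g \<in> K \<and> g ` {a<..<b} = {a<..<b}
     \<and> M \<subseteq> succ_intervals K \<and> (\<forall>A\<in>M. \<forall>B\<in>M. A \<subseteq> B \<longrightarrow> A = B)
     \<and> (\<forall>y\<in>{a<..<b} - \<Union>M. w y = g y) \<and> (\<forall>A\<in>M. \<not> X \<subseteq> A \<and> w ` A = g ` A)"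

lemma local_modelD:
  assumes "local_model K w X a b g M"
  shows local_model_interval: "a < b" "X \<subseteq> {a<..<b}"
    and local_model_mem: "g \<in> K" "g ` {a<..<b} = {a<..<b}"
    and local_model_succ_intervals: "M \<subseteq> succ_intervals K"
    and local_model_antichain: "\<forall>A\<in>M. \<forall>B\<in>M. A \<subseteq> B \<longrightarrow> A = B"
    and local_model_off: "\<forall>y\<in>{a<..<b} - \<Union>M. w y = g y"
    and local_model_on: "\<forall>A\<in>M. \<not> X \<subseteq> A \<and> w ` A = g ` A"
  using assms unfolding local_model_def by simp_all

lemma patch_families_member:
  assumes fam: "\<forall>k\<in>set ks. patch_family K J k (fam k)" and A: "A \<in> \<Union>(fam ` set ks)"
  shows "A \<in> succ_intervals K" and "A \<subseteq> J"
proof -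
  obtain k where k: "k \<in> set ks" "A \<in> fam k" using A by blast
  have P: "patch_family K J k (fam k)" using fam k(1) by (rule bspec)
  show "A \<in> succ_intervals K" using patch_family_succ_intervals[OF P] k(2) by (rule subsetD)
  show "A \<subseteq> J" using patch_family_subset[OF P k(2)] .
qed

lemma patch_families_maximal:
  assumes fam: "\<forall>k\<in>set ks. patch_family K J k (fam k)" and A: "A \<in> \<Union>(fam ` set ks)"
  obtains M where "M \<in> \<Union>(fam ` set ks)" "A \<subseteq> M" "\<forall>B\<in>\<Union>(fam ` set ks). M \<subseteq> B \<longrightarrow> M = B"
proof -
  have dis: "A = B" if "k \<in> set ks" "A \<in> fam k" "B \<in> fam k" "A \<inter> B \<noteq> {}" for k A B
    using patch_family_disjoint[OF bspec[OF fam that(1)] that(2-4)] .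
  have ne: "A \<noteq> {}" using succ_interval_nonempty[OF patch_families_member(1)[OF fam A]] .
  obtain M where "M \<in> \<Union>(fam ` set ks)" "A \<subseteq> M" "\<forall>B\<in>\<Union>(fam ` set ks). M \<subseteq> B \<longrightarrow> M = B"
    by (rule maximal_in_disjoint_families[OF List.finite_set dis A ne])
  then show ?thesis by (rule that)
qed

lemma patch_word_maximal_image:
  assumes NL: "no_linked_fixed_points K"
    and fam: "\<forall>k\<in>set ks. patch_family K J k (fam k)"
    and w: "\<forall>y\<in>J. w y = g (comp_list ks y)"
    and M: "M \<in> \<Union>(fam ` set ks)" and mx: "\<forall>B\<in>\<Union>(fam ` set ks). M \<subseteq> B \<longrightarrow> M = B"
  shows "\<forall>k\<in>set ks. k ` M = M" and "w ` M = g ` M"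
proof -
  have MK: "M \<in> succ_intervals K" and MJ: "M \<subseteq> J" using patch_families_member[OF fam M] by blast+
  show kM: "\<forall>k\<in>set ks. k ` M = M"
  proof
    fix k assume k: "k \<in> set ks"
    show "k ` M = M"
      by (rule patch_family_maximal_image[OF NL _ MK MJ]) (use fam mx k in auto)
  qed
  have "w ` M = (g \<circ> comp_list ks) ` M" using MJ w by (intro image_cong) auto
  also have "\<dots> = g ` (comp_list ks ` M)" by (simp add: image_comp)
  also have "\<dots> = g ` M" using comp_list_image[OF kM] by simp
  finally show "w ` M = g ` M" .
qed

text \<open>If g preserves a maximal interval G of the patch families, then on G a patch
  ki whose family contains G can be replaced by an element u of K; moving u to the front
  conjugates the patches before it, and these, like the later ones, restrict to patches on G.\<close>

lemma patch_word_descend: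
  assumes K: "homeo_group K" and NL: "no_linked_fixed_points K" and g: "g \<in> K"
    and fam: "\<forall>k\<in>set ks. patch_family K J k (fam k)"
    and w: "\<forall>y\<in>J. w y = g (comp_list ks y)"
    and G: "G \<in> \<Union>(fam ` set ks)" and mx: "\<forall>B\<in>\<Union>(fam ` set ks). G \<subseteq> B \<longrightarrow> G = B"
    and gG: "g ` G = G"
  obtains g' ks' where "length ks' < length ks" "g' \<in> K" "g' ` G = G"
    "\<forall>k\<in>set ks'. patch K G k" "\<forall>y\<in>G. w y = g' (comp_list ks' y)"
proof -
  obtain k0 where k0: "k0 \<in> set ks" "G \<in> fam k0" using G by blast
  have P0: "patch_family K J k0 (fam k0)" using fam k0(1) by (rule bspec)
  have GK: "G \<in> succ_intervals K" and GJ: "G \<subseteq> J" using patch_families_member[OF fam G] by blast+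
  have kG: "\<forall>k\<in>set ks. k ` G = G" by (rule patch_word_maximal_image(1)[OF NL fam w G mx])
  obtain u where u: "u \<in> K" "u ` G = G" "\<forall>y\<in>G. k0 y = u y"
    using patch_family_agrees[OF P0 k0(2)] by blast
  have uh: "homeo_plus u" using homeo_group_homeo_plus[OF K u(1)] .
  obtain ks1 ks2 where ks: "ks = ks1 @ k0 # ks2" using split_list[OF k0(1)] by blast
  define ks' where "ks' = map (\<lambda>k. inv u \<circ> k \<circ> u) ks1 @ ks2"
  have restr: "patch_family K G k {B\<in>fam k. B \<subseteq> G}" if k: "k \<in> set ks" for k
    by (rule patch_family_restrict[OF NL _ GK GJ]) (use fam k mx in auto)
  have "\<forall>k\<in>set ks'. patch K G k"
  proof
    fix k' assume "k' \<in> set ks'"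
    then consider "k' \<in> set ks2" | k where "k \<in> set ks1" "k' = inv u \<circ> k \<circ> u"
      unfolding ks'_def by auto
    then show "patch K G k'"
    proof cases
      case 1 then show ?thesis using restr ks unfolding patch_def by auto
    next
      case 2
      then have "patch_family K G k {B\<in>fam k. B \<subseteq> G}" using restr ks by auto
      then show ?thesis unfolding patch_def 2(2) using patch_family_conj[OF K _ u(1,2)] by blast
    qed
  qed
  moreover have "w y = (g \<circ> u) (comp_list ks' y)" if y: "y \<in> G" for y
  proof -
    define z where "z = comp_list ks2 y"
    have "comp_list ks2 ` G = G" using kG ks by (intro comp_list_image) auto
    then have zG: "z \<in> G" unfolding z_def using y by blast
    have "comp_list ks' y = inv u (comp_list ks1 (u z))"
      unfolding ks'_def comp_list_append comp_list_conj[OF uh] z_def by simp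
    then have "(g \<circ> u) (comp_list ks' y) = g (comp_list ks1 (u z))"
      using homeo_plus_f_inv_f[OF uh] by simp
    moreover have "w y = g (comp_list ks1 (k0 z))"
      using w y GJ unfolding ks z_def by (auto simp: comp_list_append)
    ultimately show ?thesis using u(3) zG by simp
  qed
  moreover have "(g \<circ> u) ` G = G" using gG u(2) by (metis image_comp)
  moreover have "length ks' < length ks" unfolding ks ks'_def by simp
  ultimately show ?thesis using that homeo_group_comp[OF K g u(1)] by blast
qed

lemma patch_word_local_model_base:
  assumes NL: "no_linked_fixed_points K" and ab: "a < b" and g: "g \<in> K"
    and gJ: "g ` {a<..<b} = {a<..<b}"
    and fam: "\<forall>k\<in>set ks. patch_family K {a<..<b} k (fam k)"
    and w: "\<forall>y\<in>{a<..<b}. w y = g (comp_list ks y)" and XJ: "X \<subseteq> {a<..<b}"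
    and notX: "\<forall>A\<in>\<Union>(fam ` set ks). \<not> X \<subseteq> A"
  shows "local_model K w X a b g {A\<in>\<Union>(fam ` set ks). \<forall>B\<in>\<Union>(fam ` set ks). A \<subseteq> B \<longrightarrow> A = B}"
    (is "local_model K w X a b g ?M")
proof -
  let ?L = "\<Union>(fam ` set ks)"
  have sub: "?M \<subseteq> succ_intervals K"
  proof
    fix A assume "A \<in> ?M"
    then have "A \<in> ?L" by blast
    then show "A \<in> succ_intervals K" by (rule patch_families_member(1)[OF fam])
  qed
  have anti: "\<forall>A\<in>?M. \<forall>B\<in>?M. A \<subseteq> B \<longrightarrow> A = B"
  proof (intro ballI impI)
    fix A B assume AB: "A \<in> ?M" "B \<in> ?M" "A \<subseteq> B"
    have "\<forall>C\<in>?L. A \<subseteq> C \<longrightarrow> A = C" "B \<in> ?L" using AB(1,2) by auto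
    then show "A = B" using AB(3) by blast
  qed
  have off: "\<forall>y\<in>{a<..<b} - \<Union>?M. w y = g y"
  proof
    fix y assume y: "y \<in> {a<..<b} - \<Union>?M"
    have notL: "y \<notin> A" if A: "A \<in> ?L" for A
    proof
      assume "y \<in> A"
      obtain M where "M \<in> ?L" "A \<subseteq> M" "\<forall>B\<in>?L. M \<subseteq> B \<longrightarrow> M = B"
        by (rule patch_families_maximal[OF fam A])
      then have "M \<in> ?M" "y \<in> M" using \<open>y \<in> A\<close> by auto
      then show False using y by blast
    qed
    have "k y = y" if k: "k \<in> set ks" for k
    proof (rule patch_family_fixed)
      show "patch_family K {a<..<b} k (fam k)" using fam k by blast
      show "y \<notin> \<Union>(fam k)" using notL k by blast
    qed (use y in blast)
    then have "comp_list ks y = y" by (blast intro: comp_list_fixed)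
    then show "w y = g y" using w y by simp
  qed
  have onM: "\<forall>A\<in>?M. \<not> X \<subseteq> A \<and> w ` A = g ` A"
  proof
    fix A assume A: "A \<in> ?M"
    then have AL: "A \<in> ?L" and "\<forall>B\<in>?L. A \<subseteq> B \<longrightarrow> A = B" by blast+
    then have "w ` A = g ` A" by (rule patch_word_maximal_image(2)[OF NL fam w])
    then show "\<not> X \<subseteq> A \<and> w ` A = g ` A" using notX AL by blast
  qed
  show ?thesis unfolding local_model_def by (intro conjI ab XJ g gJ sub anti off onM)
qed

lemma patch_word_local_model:
  assumes K: "homeo_group K" and NL: "no_linked_fixed_points K" and Xne: "X \<noteq> {}"
    and wX: "w ` X = X"
  shows "a < b \<Longrightarrow> g \<in> K \<Longrightarrow> g ` {a<..<b} = {a<..<b} \<Longrightarrow> \<forall>k\<in>set ks. patch K {a<..<b} k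
    \<Longrightarrow> \<forall>y\<in>{a<..<b}. w y = g (comp_list ks y) \<Longrightarrow> X \<subseteq> {a<..<b}
    \<Longrightarrow> \<exists>a' b' g' M. local_model K w X a' b' g' M"
proof (induction "length ks" arbitrary: ks a b g rule: less_induct)
  case less
  note ab = less.prems(1) and g = less.prems(2) and gJ = less.prems(3) and w = less.prems(5)
  have "\<exists>fam. \<forall>k\<in>set ks. patch_family K {a<..<b} k (fam k)"
    using less.prems(4) unfolding patch_def by (rule bchoice)
  then obtain fam where fam: "\<forall>k\<in>set ks. patch_family K {a<..<b} k (fam k)" by blast
  let ?L = "\<Union>(fam ` set ks)"
  show ?case
  proof (cases "\<exists>A\<in>?L. X \<subseteq> A")
    case True
    then obtain A where A: "A \<in> ?L" "X \<subseteq> A" by blast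
    obtain G where G0: "G \<in> ?L" "A \<subseteq> G" "\<forall>B\<in>?L. G \<subseteq> B \<longrightarrow> G = B"
      by (rule patch_families_maximal[OF fam A(1)])
    then have G: "G \<in> ?L" "X \<subseteq> G" "\<forall>B\<in>?L. G \<subseteq> B \<longrightarrow> G = B" using A(2) by blast+
    have GK: "G \<in> succ_intervals K" using patch_families_member(1)[OF fam G(1)] .
    then obtain c d f where cd: "G = {c<..<d}" "successive_fixed f c d" by (rule succ_intervalsE)
    have "X = w ` X" using wX by simp
    also have "\<dots> \<subseteq> w ` G" using G(2) by (rule image_mono)
    also have "\<dots> = g ` G" by (rule patch_word_maximal_image(2)[OF NL fam w G(1,3)])
    finally have "X \<subseteq> g ` G" .
    then have "g ` G = G"
      using succ_interval_image_eq_or_disjoint[OF K NL g GK] G(2) Xne by blast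
    then obtain g' ks' where ks': "length ks' < length ks" "g' \<in> K" "g' ` G = G"
      "\<forall>k\<in>set ks'. patch K G k" "\<forall>y\<in>G. w y = g' (comp_list ks' y)"
      by (rule patch_word_descend[OF K NL g fam w G(1,3)])
    have "c < d" using cd(2) unfolding successive_fixed_def by simp
    moreover have "g' ` {c<..<d} = {c<..<d}" "\<forall>k\<in>set ks'. patch K {c<..<d} k"
      "\<forall>y\<in>{c<..<d}. w y = g' (comp_list ks' y)" "X \<subseteq> {c<..<d}"
      using ks'(3-5) G(2) unfolding cd(1) by auto
    ultimately show ?thesis by (rule less.hyps[OF ks'(1) _ ks'(2)])
  next
    case False
    then have "\<forall>A\<in>?L. \<not> X \<subseteq> A" by blast
    from patch_word_local_model_base[OF NL ab g gJ fam w less.prems(6) this]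
    show ?thesis by blast
  qed
qed

section \<open>Successive fixed points and translation numbers of I(K)\<close>

lemma I_op_local_model:
  assumes K: "homeo_group K" and NL: "no_linked_fixed_points K" and w: "w \<in> I_op K"
    and wX: "w ` X = X" and Xne: "X \<noteq> {}" and X: "X \<subseteq> {0<..<1}"
  obtains a b g M where "local_model K w X a b g M"
proof -
  obtain hs where hs: "set hs \<subseteq> induced_set K" "w = comp_list hs"
    using I_op_comp_list[OF K w] by blast
  have "\<forall>k\<in>set hs. patch K {0<..<1} k"
    using hs(1) induced_by_patch[OF K] unfolding induced_set_def by blast
  moreover have "\<forall>y\<in>{0<..<1}. w y = id (comp_list hs y)" unfolding hs(2) by simp
  ultimately have "\<exists>a b g M. local_model K w X a b g M"
    using patch_word_local_model[OF K NL Xne wX, of 0 1 id hs] homeo_group_id[OF K] X by simp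
  then show ?thesis using that by blast
qed

lemma local_model_fixes_ends:
  assumes K: "homeo_group K" and LM: "local_model K w {p<..<q} a b g M" and pq: "p < q"
    and wp: "w p = p" and wq: "w q = q"
    and meet: "\<And>A. A \<in> M \<Longrightarrow> A \<inter> {p<..<q} \<noteq> {} \<Longrightarrow> A \<subseteq> {p<..<q} \<or> (\<forall>y\<in>A. w y \<noteq> y)"
  shows "g p = p" and "g q = q"
proof -
  note ab = local_model_interval(1)[OF LM] and XJ = local_model_interval(2)[OF LM]
    and g = local_model_mem(1)[OF LM] and gJ = local_model_mem(2)[OF LM]
    and MK = local_model_succ_intervals[OF LM] and off = local_model_off[OF LM]
  have gab: "g a = a" "g b = b"
    using homeo_plus_fixes_ends[OF homeo_group_homeo_plus[OF K g] ab gJ] by auto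
  have aq: "a \<le> p" "q \<le> b"
    using XJ pq greaterThanLessThan_subseteq_greaterThanLessThan[of p q a b] by auto
  have notM: "y \<notin> \<Union>M" if y: "y = p \<or> y = q" "w y = y" for y
  proof
    assume "y \<in> \<Union>M"
    then obtain A where A: "A \<in> M" "y \<in> A" by blast
    have "A \<in> succ_intervals K" using MK A(1) by blast
    then obtain c e f where ce: "A = {c<..<e}" "successive_fixed f c e" by (rule succ_intervalsE)
    have "(if y = p then (y + min e q)/2 else (y + max c p)/2) \<in> A \<inter> {p<..<q}"
      using A(2) ce(1) pq y(1) by auto
    then have "A \<subseteq> {p<..<q} \<or> (\<forall>y\<in>A. w y \<noteq> y)" using meet[OF A(1)] by blast
    then show False using A(2) y by auto
  qed
  have "g y = y" if y: "y = p \<or> y = q" "w y = y" for y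
  proof (cases "y \<in> {a<..<b}")
    case True then show ?thesis using off notM[OF y] y(2) by auto
  next
    case False then have "y = a \<or> y = b" using aq pq y(1) by auto
    then show ?thesis using gab by auto
  qed
  then show "g p = p" "g q = q" using wp wq by auto
qed

lemma succ_pair_I_op:
  assumes K: "homeo_group K" and NL: "no_linked_fixed_points K" and s: "succ_pair (I_op K) p q"
  shows "succ_pair K p q"
proof -
  obtain w where w: "w \<in> I_op K" "successive_fixed w p q" using s unfolding succ_pair_iff by blast
  have wh: "homeo_plus w" using homeo_group_homeo_plus[OF homeo_group_I_op w(1)] .
  from w(2) have p0: "0 \<le> p" and pq: "p < q" and q1: "q \<le> 1" and wp: "w p = p" and wq: "w q = q"
    and wf: "\<forall>y\<in>{p<..<q}. w y \<noteq> y" unfolding successive_fixed_def by auto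
  let ?X = "{p<..<q}"
  have wX: "w ` ?X = ?X" using homeo_plus_image_greaterThanLessThan[OF wh] wp wq by simp
  obtain a b g M where LM: "local_model K w ?X a b g M"
    by (rule I_op_local_model[OF K NL w(1) wX]) (use pq p0 q1 in auto)
  note g = local_model_mem(1)[OF LM] and MK = local_model_succ_intervals[OF LM]
    and XJ = local_model_interval(2)[OF LM] and off = local_model_off[OF LM]
    and onM = local_model_on[OF LM]
  have moved: "g ` A \<inter> A = {}" if A: "A \<in> M" and AX: "A \<inter> ?X \<noteq> {}" for A
  proof -
    have AK: "A \<in> succ_intervals K" using A MK by blast
    obtain c e f where ce: "A = {c<..<e}" "successive_fixed f c e" using AK by (rule succ_intervalsE)
    have ce': "c < e" using ce(2) unfolding successive_fixed_def by simp
    have "g ` A \<noteq> A"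
    proof
      assume "g ` A = A"
      then have "w ` A = A" using onM A by simp
      then have wce: "w c = c" "w e = e" using homeo_plus_fixes_ends[OF wh ce'] ce(1) by auto
      obtain x where "x \<in> A" "x \<in> ?X" using AX by blast
      then have x: "c < x" "x < e" "p < x" "x < q" using ce(1) by auto
      have "\<not> (p < c \<and> c < q)" "\<not> (p < e \<and> e < q)" using wf wce by auto
      then have "c \<le> p" "q \<le> e" using x by linarith+
      then show False using onM A ce(1) by auto
    qed
    then show ?thesis using succ_interval_image_eq_or_disjoint[OF K NL g AK] by blast
  qed
  have inner: "g y \<noteq> y" if y: "y \<in> ?X" for y
  proof (cases "y \<in> \<Union>M")
    case True
    then obtain A where A: "A \<in> M" "y \<in> A" by blast
    then have "A \<inter> ?X \<noteq> {}" using y by blast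
    then have "g ` A \<inter> A = {}" by (rule moved[OF A(1)])
    moreover have "g y \<in> g ` A" using A(2) by (rule imageI)
    ultimately show ?thesis using A(2) by (metis disjoint_iff)
  next
    case False
    then have "y \<in> {a<..<b} - \<Union>M" using XJ y by blast
    with off have "w y = g y" by (rule bspec)
    moreover have "w y \<noteq> y" using wf y by blast
    ultimately show ?thesis by simp
  qed
  have meet: "A \<subseteq> ?X \<or> (\<forall>y\<in>A. w y \<noteq> y)" if A: "A \<in> M" "A \<inter> ?X \<noteq> {}" for A
  proof -
    have "w ` A \<inter> A = {}" using moved[OF A] onM A(1) by simp
    then have "\<forall>y\<in>A. w y \<noteq> y" by (metis disjoint_iff imageI)
    then show ?thesis by blast
  qed
  note ends = local_model_fixes_ends[OF K LM pq wp wq meet]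
  have "successive_fixed g p q" unfolding successive_fixed_def using p0 pq q1 ends inner by auto
  then show ?thesis unfolding succ_pair_iff using g by blast
qed

lemma antichain_not_cover_succ_interval:
  assumes NL: "no_linked_fixed_points K" and MK: "M \<subseteq> succ_intervals K"
    and anti: "\<forall>A\<in>M. \<forall>B\<in>M. A \<subseteq> B \<longrightarrow> A = B"
    and X: "X \<in> succ_intervals K" and notX: "\<forall>A\<in>M. \<not> X \<subseteq> A"
  obtains y where "y \<in> X" "y \<notin> \<Union>M"
proof -
  obtain a b f where X': "X = {a<..<b}" "successive_fixed f a b" using X by (rule succ_intervalsE)
  have ab: "a < b" using X'(2) unfolding successive_fixed_def by simp
  have "\<exists>y\<in>X. y \<notin> \<Union>M"
  proof (cases "\<exists>A\<in>M. A \<inter> X \<noteq> {}")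
    case False
    have mid: "(a+b)/2 \<in> X" using ab X'(1) by auto
    moreover have "(a+b)/2 \<notin> \<Union>M" using False mid by blast
    ultimately show ?thesis by blast
  next
    case True
    then obtain A where A: "A \<in> M" "A \<inter> X \<noteq> {}" by blast
    have AK: "A \<in> succ_intervals K" using A(1) MK by blast
    have AX: "A \<subseteq> X" using succ_intervals_nested[OF NL AK X A(2)] notX A(1) by blast
    obtain c e f' where ce: "A = {c<..<e}" "successive_fixed f' c e" using AK by (rule succ_intervalsE)
    have ce': "c < e" using ce(2) unfolding successive_fixed_def by simp
    have ce2: "a \<le> c" "e \<le> b"
      using AX ce(1) ce' X'(1) greaterThanLessThan_subseteq_greaterThanLessThan[of c e a b] by auto
    have end_free: "y \<notin> \<Union>M" if y: "y = c \<or> y = e" for y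
    proof
      assume "y \<in> \<Union>M"
      then obtain A' where A': "A' \<in> M" "y \<in> A'" by blast
      have A'K: "A' \<in> succ_intervals K" using A'(1) MK by blast
      obtain c' e' f'' where ce'': "A' = {c'<..<e'}" "successive_fixed f'' c' e'"
        using A'K by (rule succ_intervalsE)
      have "(if y = c then (y + min e e')/2 else (y + max c c')/2) \<in> A' \<inter> A"
        using y A'(2) ce''(1) ce(1) ce' by auto
      then have "A' \<subseteq> A \<or> A \<subseteq> A'" using succ_intervals_nested[OF NL A'K AK] by blast
      moreover have "\<not> A' \<subseteq> A" using A'(2) y ce(1) by auto
      ultimately show False using anti A(1) A'(1) A'(2) y ce(1) by auto
    qed
    show ?thesis
    proof (cases "a < c")
      case True
      then show ?thesis using end_free[of c] ce' ce2 X'(1) by auto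
    next
      case False
      then have "e < b" using notX A(1) ce(1) ce2 X'(1) by (metis order.not_eq_order_implies_strict order_refl)
      then show ?thesis using end_free[of e] ce' ce2 X'(1) by auto
    qed
  qed
  then show ?thesis using that by blast
qed

lemma rel_transl_number_eq_if_agree:
  assumes H: "homeo_group H" and tau: "rel_transl_number H a b \<tau>"
    and g: "g \<in> stab H a b" and w: "w \<in> stab H a b" and y: "y \<in> {a<..<b}" and wy: "w y = g y"
  shows "\<tau> w = \<tau> g"
proof -
  have gh: "homeo_plus g" using g homeo_group_homeo_plus[OF H] unfolding stab_def by blast
  define v where "v = inv g \<circ> w"
  have "v \<in> H" unfolding v_def using g w homeo_group_comp[OF H homeo_group_inv[OF H]]
    unfolding stab_def by blast
  moreover have "v ` {a..b} = {a..b}"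
  proof -
    have "v ` {a..b} = inv g ` (w ` {a..b})" unfolding v_def by (simp add: image_comp)
    also have "\<dots> = inv g ` (g ` {a..b})" using g w unfolding stab_def by simp
    also have "\<dots> = {a..b}" by (simp add: image_image homeo_plus_inv_f_f[OF gh])
    finally show ?thesis .
  qed
  ultimately have vS: "v \<in> stab H a b" unfolding stab_def by blast
  have "v y = y" unfolding v_def using wy homeo_plus_inv_f_f[OF gh] by simp
  then have "\<tau> v = 0" using tau vS y unfolding rel_transl_number_def by blast
  moreover have "g \<circ> v = w" unfolding v_def using homeo_plus_f_inv_f[OF gh] by (auto simp: fun_eq_iff)
  moreover have "\<tau> (g \<circ> v) = \<tau> g + \<tau> v" using tau g vS unfolding rel_transl_number_def by blast
  ultimately show ?thesis by simp
qed

lemma stab_I_op_rel_transl_number: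
  assumes K: "homeo_group K" and NL: "no_linked_fixed_points K" and H: "homeo_group H"
    and KH: "K \<subseteq> H" and IH: "I_op K \<subseteq> H" and tau: "rel_transl_number H a b \<tau>"
    and s: "succ_pair K a b" and w: "w \<in> stab (I_op K) a b"
  obtains g where "g \<in> stab K a b" "\<tau> w = \<tau> g"
proof -
  have wI: "w \<in> I_op K" and wab: "w ` {a..b} = {a..b}" using w unfolding stab_def by auto
  have wh: "homeo_plus w" using homeo_group_homeo_plus[OF homeo_group_I_op wI] .
  obtain f where "f \<in> K" "successive_fixed f a b" using s unfolding succ_pair_iff by blast
  then have a0: "0 \<le> a" and ab: "a < b" and b1: "b \<le> 1" unfolding successive_fixed_def by auto
  have "{w a..w b} = {a..b}" using wab homeo_plus_image_atLeastAtMost[OF wh] by simp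
  then have wa: "w a = a" and wb: "w b = b" using ab by auto
  let ?X = "{a<..<b}"
  have XK: "?X \<in> succ_intervals K" using s by (rule succ_intervalsI)
  have wX: "w ` ?X = ?X" using homeo_plus_image_greaterThanLessThan[OF wh] wa wb by simp
  obtain a' b' g M where LM: "local_model K w ?X a' b' g M"
    by (rule I_op_local_model[OF K NL wI wX]) (use ab a0 b1 in auto)
  note g = local_model_mem(1)[OF LM] and MK = local_model_succ_intervals[OF LM]
    and XJ = local_model_interval(2)[OF LM] and anti = local_model_antichain[OF LM]
    and off = local_model_off[OF LM]
  have notX: "\<forall>A\<in>M. \<not> ?X \<subseteq> A" using local_model_on[OF LM] by blast
  have meet: "A \<subseteq> ?X \<or> (\<forall>y\<in>A. w y \<noteq> y)" if A: "A \<in> M" "A \<inter> ?X \<noteq> {}" for A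
  proof -
    have "A \<in> succ_intervals K" using A(1) MK by blast
    then show ?thesis using succ_intervals_nested[OF NL _ XK A(2)] notX A(1) by blast
  qed
  note ends = local_model_fixes_ends[OF K LM ab wa wb meet]
  have gS: "g \<in> stab K a b"
    unfolding stab_def using g ends homeo_plus_image_atLeastAtMost[OF homeo_group_homeo_plus[OF K g]] by simp
  obtain y where y: "y \<in> ?X" "y \<notin> \<Union>M" by (rule antichain_not_cover_succ_interval[OF NL MK anti XK notX])
  have "\<tau> w = \<tau> g"
  proof (rule rel_transl_number_eq_if_agree[OF H tau _ _ y(1)])
    show "g \<in> stab H a b" "w \<in> stab H a b" using gS w KH IH unfolding stab_def by auto
    show "w y = g y" using off y XJ by blast
  qed
  then show ?thesis using that gS by blast
qed

section \<open>Iterating I\<close>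

lemma homeo_group_I_op_power: "homeo_group G \<Longrightarrow> homeo_group ((I_op ^^ n) G)"
  by (cases n) (auto simp: homeo_group_I_op)

lemma I_op_power_mono:
  assumes G: "homeo_group G" and mn: "m \<le> n"
  shows "(I_op ^^ m) G \<subseteq> (I_op ^^ n) G"
  using I_op_superset[OF homeo_group_I_op_power[OF G]] lift_Suc_mono_le[of "\<lambda>n. (I_op ^^ n) G", OF _ mn]
  by simp

lemma mem_I_infty_iff: "f \<in> I_infty G \<longleftrightarrow> (\<exists>n. f \<in> (I_op ^^ n) G)"
  unfolding I_infty_def by blast

lemma I_op_power_subset_I_infty: "(I_op ^^ n) G \<subseteq> I_infty G"
  unfolding I_infty_def by blast

lemma I_infty_superset: "G \<subseteq> I_infty G"
  using I_op_power_subset_I_infty[of 0 G] by simp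

lemma homeo_group_I_infty:
  assumes G: "homeo_group G" shows "homeo_group (I_infty G)"
  unfolding homeo_group_def
proof (intro conjI ballI)
  show "homeo_plus g" if "g \<in> I_infty G" for g
    using that homeo_group_homeo_plus[OF homeo_group_I_op_power[OF G]] unfolding mem_I_infty_iff by blast
  show "id \<in> I_infty G"
    using homeo_group_id[OF homeo_group_I_op_power[OF G, of 0]] unfolding mem_I_infty_iff by blast
  show "f \<circ> g \<in> I_infty G" if fg: "f \<in> I_infty G" "g \<in> I_infty G" for f g
  proof -
    obtain m n where "f \<in> (I_op ^^ m) G" "g \<in> (I_op ^^ n) G" using fg unfolding mem_I_infty_iff by blast
    then have "f \<in> (I_op ^^ max m n) G" "g \<in> (I_op ^^ max m n) G"
      using I_op_power_mono[OF G, of m "max m n"] I_op_power_mono[OF G, of n "max m n"] by auto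
    then show ?thesis
      using homeo_group_comp[OF homeo_group_I_op_power[OF G]] unfolding mem_I_infty_iff by blast
  qed
  show "inv g \<in> I_infty G" if "g \<in> I_infty G" for g
    using that homeo_group_inv[OF homeo_group_I_op_power[OF G]] unfolding mem_I_infty_iff by blast
qed

lemma no_linked_fixed_points_if_succ_pairs:
  assumes "no_linked_fixed_points G" and "\<And>a b. succ_pair H a b \<Longrightarrow> succ_pair G a b"
  shows "no_linked_fixed_points H"
  using assms unfolding no_linked_fixed_points_def by blast

lemma succ_pair_I_op_power:
  assumes G: "homeo_group G" and NL: "no_linked_fixed_points G"
  shows "succ_pair ((I_op ^^ n) G) a b \<Longrightarrow> succ_pair G a b"
proof (induction n arbitrary: a b)
  case (Suc n)
  let ?K = "(I_op ^^ n) G"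
  have "no_linked_fixed_points ?K"
    using no_linked_fixed_points_if_succ_pairs[OF NL Suc.IH] .
  then have "succ_pair ?K a b"
    using succ_pair_I_op[OF homeo_group_I_op_power[OF G]] Suc.prems by simp
  then show ?case by (rule Suc.IH)
qed simp

lemma succ_pair_I_infty:
  assumes G: "homeo_group G" and NL: "no_linked_fixed_points G" and s: "succ_pair (I_infty G) a b"
  shows "succ_pair G a b"
proof -
  obtain f where f: "f \<in> I_infty G" "successive_fixed f a b" using s unfolding succ_pair_iff by blast
  then obtain n where "f \<in> (I_op ^^ n) G" unfolding mem_I_infty_iff by blast
  then have "succ_pair ((I_op ^^ n) G) a b" using f(2) unfolding succ_pair_iff by blast
  then show ?thesis by (rule succ_pair_I_op_power[OF G NL])
qed

lemma complete_group_I_infty: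
  assumes G: "homeo_group G" and NL: "no_linked_fixed_points G"
  shows "complete_group (I_infty G)"
  unfolding complete_group_def
proof (intro conjI ballI allI impI)
  show "homeo_group (I_infty G)" using homeo_group_I_infty[OF G] .
  show "no_linked_fixed_points (I_infty G)"
    using no_linked_fixed_points_if_succ_pairs[OF NL succ_pair_I_infty[OF G NL]] .
  show "h \<in> I_infty G" if gh: "g \<in> I_infty G" "induced_by h g" for g h
  proof -
    obtain n where "g \<in> (I_op ^^ n) G" using gh(1) unfolding mem_I_infty_iff by blast
    then have "h \<in> induced_set ((I_op ^^ n) G)" using gh(2) unfolding induced_set_def by blast
    then have "h \<in> (I_op ^^ Suc n) G" using gen_group_superset unfolding I_op_eq by auto
    then show ?thesis unfolding mem_I_infty_iff by blast
  qed
qed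

text \<open>A homeomorphism induced by g moves each point either nowhere or as g does.\<close>

lemma comp_list_induced_orbit:
  assumes K: "homeo_group K" and hs: "set hs \<subseteq> induced_set K"
  shows "\<exists>k\<in>K. comp_list hs x = k x"
  using hs
proof (induction hs)
  case Nil then show ?case using homeo_group_id[OF K] by (intro bexI[of _ id]) auto
next
  case (Cons h hs)
  then obtain k where k: "k \<in> K" "comp_list hs x = k x" by auto
  obtain g where g: "g \<in> K" "induced_by h g" using Cons.prems unfolding induced_set_def by auto
  have "h (k x) = k x \<or> h (k x) = g (k x)"
    using g(2) homeo_plus_outside[OF induced_by_homeo_plus[OF g(2)], of "k x"]
    unfolding induced_by_def by (cases "k x \<in> {0..1}") auto
  then show ?case
  proof
    assume "h (k x) = k x"
    then show ?case using k by auto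
  next
    assume "h (k x) = g (k x)"
    then have "comp_list (h # hs) x = (g \<circ> k) x" using k by simp
    then show ?case using homeo_group_comp[OF K g(1) k(1)] by blast
  qed
qed

lemma I_op_power_orbit:
  assumes G: "homeo_group G"
  shows "w \<in> (I_op ^^ n) G \<Longrightarrow> \<exists>g\<in>G. w x = g x"
proof (induction n arbitrary: w x)
  case (Suc n)
  obtain hs where hs: "set hs \<subseteq> induced_set ((I_op ^^ n) G)" "w = comp_list hs"
    using I_op_comp_list[OF homeo_group_I_op_power[OF G]] Suc.prems by auto
  then obtain k where "k \<in> (I_op ^^ n) G" "w x = k x"
    using comp_list_induced_orbit[OF homeo_group_I_op_power[OF G] hs(1)] by auto
  then show ?case using Suc.IH by metis
qed auto

lemma I_infty_orbit:
  assumes G: "homeo_group G"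
  shows "{g x | g. g \<in> I_infty G} = {g x | g. g \<in> G}"
proof
  show "{g x | g. g \<in> I_infty G} \<subseteq> {g x | g. g \<in> G}"
    using I_op_power_orbit[OF G] unfolding mem_I_infty_iff by fastforce
  show "{g x | g. g \<in> G} \<subseteq> {g x | g. g \<in> I_infty G}"
    using I_infty_superset by blast
qed

lemma I_infty_rel_transl_number:
  assumes G: "homeo_group G" and NL: "no_linked_fixed_points G"
    and s: "succ_pair G a b" and tau: "rel_transl_number (I_infty G) a b \<tau>"
  shows "\<tau> ` stab G a b = \<tau> ` stab (I_infty G) a b"
proof
  show "\<tau> ` stab G a b \<subseteq> \<tau> ` stab (I_infty G) a b"
    using I_infty_superset unfolding stab_def by blast
  have "\<tau> ` stab ((I_op ^^ n) G) a b \<subseteq> \<tau> ` stab G a b" for n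
  proof (induction n)
    case (Suc n)
    let ?K = "(I_op ^^ n) G"
    have K: "homeo_group ?K" using homeo_group_I_op_power[OF G] .
    have nl: "no_linked_fixed_points ?K"
      using no_linked_fixed_points_if_succ_pairs[OF NL succ_pair_I_op_power[OF G NL]] .
    have KH: "?K \<subseteq> I_infty G" and IH: "I_op ?K \<subseteq> I_infty G"
      using I_op_power_subset_I_infty[of n G] I_op_power_subset_I_infty[of "Suc n" G] by simp_all
    have sK: "succ_pair ?K a b" using succ_pair_mono[OF I_op_power_mono[OF G, of 0 n]] s by simp
    show ?case
    proof
      fix t assume "t \<in> \<tau> ` stab ((I_op ^^ Suc n) G) a b"
      then obtain w where w: "w \<in> stab (I_op ?K) a b" "t = \<tau> w" by auto
      obtain g where "g \<in> stab ?K a b" "\<tau> w = \<tau> g"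
        by (rule stab_I_op_rel_transl_number[OF K nl homeo_group_I_infty[OF G] KH IH tau sK w(1)])
      then show "t \<in> \<tau> ` stab G a b" using Suc.IH w(2) by blast
    qed
  qed simp
  then show "\<tau> ` stab (I_infty G) a b \<subseteq> \<tau> ` stab G a b"
    unfolding stab_def mem_I_infty_iff by blast
qed

lemma I_infty_least:
  assumes H: "complete_group H" and GH: "G \<subseteq> H"
  shows "I_infty G \<subseteq> H"
proof -
  have hg: "homeo_group H" using H unfolding complete_group_def by blast
  have "(I_op ^^ n) G \<subseteq> H" for n
  proof (induction n)
    case (Suc n)
    have "induced_set ((I_op ^^ n) G) \<subseteq> H"
      using H Suc unfolding induced_set_def complete_group_def by blast
    then have "I_op ((I_op ^^ n) G) \<subseteq> H"
      unfolding I_op_eq[of "(I_op ^^ n) G"] by (rule gen_group_least[OF hg])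
    then show ?case by simp
  qed (use GH in simp)
  then show ?thesis unfolding I_infty_def by blast
qed

theorem lemmal:
  assumes "homeo_group G" and "no_linked_fixed_points G"
  shows "complete_group (I_infty G)
    \<and> (\<forall>x\<in>{0..1}. {g x | g. g \<in> I_infty G} = {g x | g. g \<in> G})
    \<and> (\<forall>a b. succ_pair (I_infty G) a b \<longrightarrow> succ_pair G a b)
    \<and> (\<forall>a b \<tau>. succ_pair G a b \<longrightarrow> rel_transl_number (I_infty G) a b \<tau> \<longrightarrow>
          \<tau> ` stab G a b = \<tau> ` stab (I_infty G) a b)
    \<and> (\<forall>H. complete_group H \<longrightarrow> G \<subseteq> H \<longrightarrow> I_infty G \<subseteq> H)"
proof (intro conjI allI impI ballI)
  show "complete_group (I_infty G)" by (rule complete_group_I_infty[OF assms])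
  show "{g x | g. g \<in> I_infty G} = {g x | g. g \<in> G}" for x
    by (rule I_infty_orbit[OF assms(1)])
  show "succ_pair G a b" if "succ_pair (I_infty G) a b" for a b
    by (rule succ_pair_I_infty[OF assms that])
  show "\<tau> ` stab G a b = \<tau> ` stab (I_infty G) a b"
    if "succ_pair G a b" "rel_transl_number (I_infty G) a b \<tau>" for a b \<tau>
    by (rule I_infty_rel_transl_number[OF assms that])
  show "I_infty G \<subseteq> H" if "complete_group H" "G \<subseteq> H" for H
    by (rule I_infty_least[OF that])
qed

end
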